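(* Let $\mathcal{D}_R$ be the class of all finite reflexive digraphs and let $D\in\mathcal{D}_R$. The class $\mathrm{Av}(D)=\{E\in\mathcal{D}_R: D\not\preceq E\}$, with respect to the strong homomorphic image ordering $\preceq$, is well quasi-ordered if and only if $D$ is isomorphic to the complete digraph $\overrightarrow{K}_n$ for some $n\ge1$.
   Context: A digraph is a set $D$ with a binary relation $E(D)\subseteq D\times D$; reflexive means every loop $(x,x)$ is an edge. $\overrightarrow{K}_n$ is the digraph on $\{1,\dots,n\}$ with edge set $\{(i,j):1\le i,j\le n\}$. A homomorphism maps edges to edges; it is strong if additionally every edge of the target between vertices of the image is the image of an edge. Strong homomorphic image ordering: $A\preceq B$ iff there is a surjective strong homomorphism $B\to A$. Well quasi-ordered means no infinite strictly decreasing sequence and no infinite antichain; digraphs considered up to isomorphism. *)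

theory Defs
  imports Main
begin

type_synonym 'a digraph = "'a set \<times> ('a \<times> 'a) set"

definition verts :: "'a digraph \<Rightarrow> 'a set" where "verts D = fst D"
definition arcs :: "'a digraph \<Rightarrow> ('a \<times> 'a) set" where "arcs D = snd D"

definition is_digraph :: "'a digraph \<Rightarrow> bool" where
  "is_digraph D \<longleftrightarrow> arcs D \<subseteq> verts D \<times> verts D"

definition fin_refl_digraph :: "'a digraph \<Rightarrow> bool" where
  "fin_refl_digraph D \<longleftrightarrow> is_digraph D \<and> finite (verts D) \<and> (\<forall>x\<in>verts D. (x, x) \<in> arcs D)"

definition strong_hom :: "('a \<Rightarrow> 'b) \<Rightarrow> 'a digraph \<Rightarrow> 'b digraph \<Rightarrow> bool" where
  "strong_hom f A B \<longleftrightarrow>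
     f ` verts A \<subseteq> verts B \<and>
     (\<forall>x y. (x, y) \<in> arcs A \<longrightarrow> (f x, f y) \<in> arcs B) \<and>
     (\<forall>u\<in>f ` verts A. \<forall>v\<in>f ` verts A. (u, v) \<in> arcs B \<longrightarrow>
        (\<exists>x y. (x, y) \<in> arcs A \<and> f x = u \<and> f y = v))"

definition shi_le :: "'a digraph \<Rightarrow> 'b digraph \<Rightarrow> bool" where
  "shi_le A B \<longleftrightarrow> (\<exists>f. strong_hom f B A \<and> f ` verts B = verts A)"

definition digraph_iso :: "'a digraph \<Rightarrow> 'b digraph \<Rightarrow> bool" where
  "digraph_iso A B \<longleftrightarrow> (\<exists>f. bij_betw f (verts A) (verts B) \<and>
     (\<forall>x\<in>verts A. \<forall>y\<in>verts A. (x, y) \<in> arcs A \<longleftrightarrow> (f x, f y) \<in> arcs B))"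

definition complete_digraph :: "nat \<Rightarrow> nat digraph" where
  "complete_digraph n = ({1..n}, {1..n} \<times> {1..n})"

text \<open>Finite reflexive digraphs up to isomorphism are represented by those with vertex set a
  (finite) subset of nat. Av(D) is the class of such E with not D \<preceq> E.\<close>
definition Av :: "'a digraph \<Rightarrow> nat digraph set" where
  "Av D = {E. fin_refl_digraph E \<and> \<not> shi_le D E}"

text \<open>Well quasi-order as in the paper: no infinite strictly decreasing sequence and no infinite
  antichain (pairwise incomparable members, which are then pairwise non-isomorphic).\<close>
definition wqo_shi :: "nat digraph set \<Rightarrow> bool" where
  "wqo_shi C \<longleftrightarrow>
     \<not> (\<exists>s :: nat \<Rightarrow> nat digraph. (\<forall>i. s i \<in> C) \<and> (\<forall>i. shi_le (s (Suc i)) (s i) \<and> \<not> shi_le (s i) (s (Suc i)))) \<and>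
     \<not> (\<exists>s :: nat \<Rightarrow> nat digraph. (\<forall>i. s i \<in> C) \<and> (\<forall>i j. i \<noteq> j \<longrightarrow> \<not> shi_le (s i) (s j)))"

end

theory Submission
  imports Defs Complex_Main
begin

text \<open>If \<open>D\<close> is not complete, it is empty or has two non-adjacent vertices, or it has an arc without
  its reverse. Strong homomorphic images of semicomplete (resp. symmetric) digraphs are again
  semicomplete (resp. symmetric), so in the first case the complements of the directed cycles, and in
  the second the complements of the undirected cycles, all avoid \<open>D\<close>; and they form an infinite
  antichain, because every surjective strong homomorphism between two of them is injective.

  If \<open>D\<close> is \<open>K\<^sub>n\<close>, descending chains are excluded by counting vertices. A digraph \<open>E\<close> avoiding \<open>K\<^sub>n\<close>
  has no matching of \<open>n\<^sup>2\<close> arcs, since the ends of such a matching can be sent onto all arcs of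
  \<open>K\<^sub>n\<close>. So the ends of a maximum matching form a vertex cover of at most \<open>2n\<^sup>2\<close> vertices. The
  uncovered vertices are pairwise non-adjacent, and \<open>E\<close> is determined by the digraph on the cover
  and by how many uncovered vertices have each possible adjacency pattern to the cover. Only finitely
  many cover digraphs and patterns occur, and a digraph whose pattern counts dominate those of another
  with the same cover data maps onto it; Dickson's lemma therefore yields a comparable pair in every
  infinite sequence.\<close>

lemma fin_refl_digraph_arcsD:
  "fin_refl_digraph D \<Longrightarrow> (x, y) \<in> arcs D \<Longrightarrow> x \<in> verts D \<and> y \<in> verts D"
  unfolding fin_refl_digraph_def is_digraph_def by auto

lemma fin_refl_digraph_reflD: "fin_refl_digraph D \<Longrightarrow> x \<in> verts D \<Longrightarrow> (x, x) \<in> arcs D"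
  unfolding fin_refl_digraph_def by auto

lemma fin_refl_digraph_finite: "fin_refl_digraph D \<Longrightarrow> finite (verts D)"
  unfolding fin_refl_digraph_def by auto

lemma strong_hom_arcD: "strong_hom f A B \<Longrightarrow> (x, y) \<in> arcs A \<Longrightarrow> (f x, f y) \<in> arcs B"
  unfolding strong_hom_def by blast

lemma strong_hom_liftD:
  "strong_hom f A B \<Longrightarrow> u \<in> f ` verts A \<Longrightarrow> v \<in> f ` verts A \<Longrightarrow> (u, v) \<in> arcs B \<Longrightarrow>
    \<exists>x y. (x, y) \<in> arcs A \<and> f x = u \<and> f y = v"
  unfolding strong_hom_def by blast

lemma verts_complete_digraph [simp]: "verts (complete_digraph n) = {1..n}"
  and arcs_complete_digraph [simp]: "arcs (complete_digraph n) = {1..n} \<times> {1..n}"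
  by (simp_all add: complete_digraph_def verts_def arcs_def)

lemma digraph_iso_complete_digraph_iff:
  assumes D: "fin_refl_digraph D"
  shows "(\<exists>n\<ge>1. digraph_iso D (complete_digraph n)) \<longleftrightarrow> verts D \<noteq> {} \<and> arcs D = verts D \<times> verts D"
proof
  assume "\<exists>n\<ge>1. digraph_iso D (complete_digraph n)"
  then obtain n :: nat and f where "n \<ge> 1" and bij: "bij_betw f (verts D) {1..n}"
    and arcs: "\<forall>x\<in>verts D. \<forall>y\<in>verts D. (x, y) \<in> arcs D \<longleftrightarrow> (f x, f y) \<in> {1..n} \<times> {1..n}"
    unfolding digraph_iso_def verts_complete_digraph arcs_complete_digraph by blast
  then have "verts D \<noteq> {}" using bij_betw_empty1 by fastforce
  moreover have "verts D \<times> verts D \<subseteq> arcs D" using arcs bij bij_betwE by fastforce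
  ultimately show "verts D \<noteq> {} \<and> arcs D = verts D \<times> verts D"
    using fin_refl_digraph_arcsD[OF D] by auto
next
  assume complete: "verts D \<noteq> {} \<and> arcs D = verts D \<times> verts D"
  let ?n = "card (verts D)"
  obtain h where "bij_betw h {1..?n} (verts D)"
    using ex_bij_betw_nat_finite_1 fin_refl_digraph_finite[OF D] by blast
  then have bij: "bij_betw (inv_into {1..?n} h) (verts D) {1..?n}" by (rule bij_betw_inv_into)
  have "?n \<ge> 1" using complete fin_refl_digraph_finite[OF D] by (simp add: Suc_leI card_gt_0_iff)
  moreover have "digraph_iso D (complete_digraph ?n)"
    unfolding digraph_iso_def using bij complete bij_betwE by fastforce
  ultimately show "\<exists>n\<ge>1. digraph_iso D (complete_digraph n)" by blast
qed

lemma shi_le_card_le: "shi_le A B \<Longrightarrow> finite (verts B) \<Longrightarrow> card (verts A) \<le> card (verts B)"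
  unfolding shi_le_def by (metis card_image_le)

lemma strong_hom_inv_into:
  assumes A: "fin_refl_digraph A" and B: "fin_refl_digraph B"
    and hom: "strong_hom f B A" and bij: "bij_betw f (verts B) (verts A)"
  shows "strong_hom (inv_into (verts B) f) A B"
proof -
  let ?g = "inv_into (verts B) f"
  have gf: "\<And>x. x \<in> verts B \<Longrightarrow> ?g (f x) = x" using bij bij_betw_inv_into_left by metis
  have onto: "f ` verts B = verts A" using bij bij_betw_imp_surj_on by blast
  show ?thesis
    unfolding strong_hom_def
  proof (intro conjI allI impI ballI)
    show "?g ` verts A \<subseteq> verts B" using bij_betw_inv_into[OF bij] bij_betw_imp_surj_on by blast
  next
    fix a b assume ab: "(a, b) \<in> arcs A"
    then obtain x y where "(x, y) \<in> arcs B" "f x = a" "f y = b"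
      using strong_hom_liftD[OF hom] onto fin_refl_digraph_arcsD[OF A] by metis
    then show "(?g a, ?g b) \<in> arcs B" using gf fin_refl_digraph_arcsD[OF B] by auto
  next
    fix u v assume "(u, v) \<in> arcs B"
    then show "\<exists>x y. (x, y) \<in> arcs A \<and> ?g x = u \<and> ?g y = v"
      using strong_hom_arcD[OF hom] gf fin_refl_digraph_arcsD[OF B] by metis
  qed
qed

lemma shi_le_converse_if_card_eq:
  assumes A: "fin_refl_digraph A" and B: "fin_refl_digraph B" and le: "shi_le A B"
    and card: "card (verts A) = card (verts B)"
  shows "shi_le B A"
proof -
  obtain f where hom: "strong_hom f B A" and onto: "f ` verts B = verts A"
    using le unfolding shi_le_def by auto
  then have bij: "bij_betw f (verts B) (verts A)"
    using card fin_refl_digraph_finite[OF B] by (simp add: bij_betw_def eq_card_imp_inj_on)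
  show ?thesis unfolding shi_le_def
    using strong_hom_inv_into[OF A B hom bij] bij_betw_inv_into[OF bij] bij_betw_imp_surj_on by blast
qed

lemma no_shi_descending_chain:
  assumes fin: "\<And>i. fin_refl_digraph (s i)"
    and le: "\<And>i. shi_le (s (Suc i)) (s i)" and not_ge: "\<And>i. \<not> shi_le (s i) (s (Suc i))"
  shows False
proof -
  have less: "card (verts (s (Suc i))) < card (verts (s i))" for i
  proof -
    have "card (verts (s (Suc i))) \<noteq> card (verts (s i))"
      using shi_le_converse_if_card_eq[OF fin fin le] not_ge by blast
    then show ?thesis using shi_le_card_le[OF le[of i] fin_refl_digraph_finite[OF fin]] by simp
  qed
  have "card (verts (s i)) + i \<le> card (verts (s 0))" for i
  proof (induction i)
    case (Suc i) then show ?case using less[of i] by simp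
  qed simp
  from this[of "Suc (card (verts (s 0)))"] show False by simp
qed

section \<open>Antichains of complements of cycles\<close>

definition semicomplete :: "'a digraph \<Rightarrow> bool" where
  "semicomplete D \<longleftrightarrow> (\<forall>x\<in>verts D. \<forall>y\<in>verts D. x \<noteq> y \<longrightarrow> (x, y) \<in> arcs D \<or> (y, x) \<in> arcs D)"

definition symmetric_digraph :: "'a digraph \<Rightarrow> bool" where
  "symmetric_digraph D \<longleftrightarrow> (\<forall>x y. (x, y) \<in> arcs D \<longrightarrow> (y, x) \<in> arcs D)"

lemma complete_if_semicomplete_symmetric:
  assumes "fin_refl_digraph D" "semicomplete D" "symmetric_digraph D"
  shows "arcs D = verts D \<times> verts D"
proof
  show "arcs D \<subseteq> verts D \<times> verts D" using fin_refl_digraph_arcsD[OF assms(1)] by auto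
  show "verts D \<times> verts D \<subseteq> arcs D"
    using assms fin_refl_digraph_reflD unfolding semicomplete_def symmetric_digraph_def by fast
qed

lemma shi_le_nonempty: "shi_le D E \<Longrightarrow> verts E \<noteq> {} \<Longrightarrow> verts D \<noteq> {}"
  unfolding shi_le_def by auto

lemma semicomplete_if_shi_le:
  assumes le: "shi_le D E" and E: "semicomplete E"
  shows "semicomplete D"
  unfolding semicomplete_def
proof (intro ballI impI)
  obtain f where hom: "strong_hom f E D" and onto: "f ` verts E = verts D"
    using le unfolding shi_le_def by blast
  fix x y assume "x \<in> verts D" "y \<in> verts D" "x \<noteq> y"
  then obtain p q where pq: "p \<in> verts E" "q \<in> verts E" "f p = x" "f q = y" "p \<noteq> q"
    using onto by (metis imageE)
  then have "(p, q) \<in> arcs E \<or> (q, p) \<in> arcs E" using E unfolding semicomplete_def by blast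
  then show "(x, y) \<in> arcs D \<or> (y, x) \<in> arcs D" using strong_hom_arcD[OF hom] pq by blast
qed

lemma symmetric_if_shi_le:
  assumes D: "fin_refl_digraph D" and le: "shi_le D E" and E: "symmetric_digraph E"
  shows "symmetric_digraph D"
  unfolding symmetric_digraph_def
proof (intro allI impI)
  obtain f where hom: "strong_hom f E D" and onto: "f ` verts E = verts D"
    using le unfolding shi_le_def by blast
  fix x y assume "(x, y) \<in> arcs D"
  then obtain s t where "(s, t) \<in> arcs E" "f s = x" "f t = y"
    using strong_hom_liftD[OF hom] onto fin_refl_digraph_arcsD[OF D] by metis
  then show "(y, x) \<in> arcs D"
    using E strong_hom_arcD[OF hom] unfolding symmetric_digraph_def by blast
qed

lemma not_wqo_shi_if_antichain:
  fixes c :: nat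
  assumes mem: "\<And>n. n \<ge> c \<Longrightarrow> X n \<in> C"
    and antichain: "\<And>m n. m \<ge> c \<Longrightarrow> n \<ge> c \<Longrightarrow> shi_le (X m) (X n) \<Longrightarrow> m = n"
  shows "\<not> wqo_shi C"
proof -
  define s where "s i = X (i + c)" for i
  have "\<forall>i. s i \<in> C" using mem unfolding s_def by simp
  moreover have "\<forall>i j. i \<noteq> j \<longrightarrow> \<not> shi_le (s i) (s j)"
    using antichain unfolding s_def by (metis add_right_cancel le_add2)
  ultimately show ?thesis unfolding wqo_shi_def by blast
qed

definition cycle_succ :: "nat \<Rightarrow> nat \<Rightarrow> nat" where
  "cycle_succ b i = (if Suc i = b then 0 else Suc i)"

definition co_cycle :: "nat \<Rightarrow> nat digraph" where
  "co_cycle b = ({..<b}, {(i, j). i < b \<and> j < b \<and> j \<noteq> cycle_succ b i})"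

definition cycle_adj :: "nat \<Rightarrow> nat \<Rightarrow> nat \<Rightarrow> bool" where
  "cycle_adj b i j \<longleftrightarrow> j = cycle_succ b i \<or> i = cycle_succ b j"

definition co_sym_cycle :: "nat \<Rightarrow> nat digraph" where
  "co_sym_cycle b = ({..<b}, {(i, j). i < b \<and> j < b \<and> \<not> cycle_adj b i j})"

lemma cycle_succ_neq: "b \<ge> 2 \<Longrightarrow> cycle_succ b i \<noteq> i"
  unfolding cycle_succ_def by auto

lemma cycle_succ_succ_neq: "b \<ge> 3 \<Longrightarrow> i < b \<Longrightarrow> cycle_succ b (cycle_succ b i) \<noteq> i"
  unfolding cycle_succ_def by auto

lemma fin_refl_co_cycle: "b \<ge> 2 \<Longrightarrow> fin_refl_digraph (co_cycle b)"
  unfolding fin_refl_digraph_def is_digraph_def verts_def arcs_def co_cycle_def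
  by auto (metis cycle_succ_neq)

lemma fin_refl_co_sym_cycle: "b \<ge> 2 \<Longrightarrow> fin_refl_digraph (co_sym_cycle b)"
  unfolding fin_refl_digraph_def is_digraph_def verts_def arcs_def co_sym_cycle_def cycle_adj_def
  by auto (metis cycle_succ_neq)

lemma semicomplete_co_cycle: "b \<ge> 3 \<Longrightarrow> semicomplete (co_cycle b)"
  unfolding semicomplete_def verts_def arcs_def co_cycle_def
  by auto (metis cycle_succ_succ_neq)

lemma symmetric_co_sym_cycle: "symmetric_digraph (co_sym_cycle b)"
  unfolding symmetric_digraph_def arcs_def co_sym_cycle_def cycle_adj_def by auto

lemma ex_cycle_succ_eq: "v < a \<Longrightarrow> \<exists>u<a. cycle_succ a u = v"
  unfolding cycle_succ_def by (cases v) (auto intro: exI[of _ "a - 1"])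

lemma co_cycle_shi_le_imp_eq:
  assumes "shi_le (co_cycle a) (co_cycle b)"
  shows "a = b"
proof -
  obtain f where hom: "strong_hom f (co_cycle b) (co_cycle a)" and onto: "f ` {..<b} = {..<a}"
    using assms unfolding shi_le_def co_cycle_def verts_def by auto
  have non_succ: "\<And>x y. x < b \<Longrightarrow> y < b \<Longrightarrow> y \<noteq> cycle_succ b x \<Longrightarrow> f y \<noteq> cycle_succ a (f x)"
    using hom unfolding strong_hom_def co_cycle_def arcs_def by auto
  txt \<open>All preimages of \<open>cycle_succ a u\<close> are successors of one preimage of \<open>u\<close>.\<close>
  have "inj_on f {..<b}"
  proof (rule inj_onI)
    fix y1 y2 assume y: "y1 \<in> {..<b}" "y2 \<in> {..<b}" "f y1 = f y2"
    obtain u where "u < a" "cycle_succ a u = f y1"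
      using ex_cycle_succ_eq onto y by blast
    then obtain x where "x < b" "cycle_succ a (f x) = f y1" using onto by (metis imageE lessThan_iff)
    then show "y1 = y2" using non_succ[of x y1] non_succ[of x y2] y by auto
  qed
  then show ?thesis using onto by (metis card_image card_lessThan)
qed

lemma cycle_adj_common_neighbours:
  assumes "b \<ge> 5" "x < b" "z < b" "y1 < b" "y2 < b" "y1 \<noteq> y2"
    and "cycle_adj b x y1" "cycle_adj b x y2" "cycle_adj b z y1" "cycle_adj b z y2"
  shows "x = z"
  using assms unfolding cycle_adj_def cycle_succ_def by (auto split: if_splits)

lemma co_sym_cycle_shi_le_imp_eq:
  assumes "shi_le (co_sym_cycle a) (co_sym_cycle b)" "a \<ge> 3" "b \<ge> 5"
  shows "a = b"
proof -
  obtain f where hom: "strong_hom f (co_sym_cycle b) (co_sym_cycle a)" and onto: "f ` {..<b} = {..<a}"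
    using assms unfolding shi_le_def co_sym_cycle_def verts_def by auto
  have adj: "\<And>x y. x < b \<Longrightarrow> y < b \<Longrightarrow> cycle_adj a (f x) (f y) \<Longrightarrow> cycle_adj b x y"
    using hom unfolding strong_hom_def co_sym_cycle_def arcs_def by auto
  txt \<open>Two preimages of \<open>v\<close> would be common cycle neighbours of preimages of the two distinct
    cycle neighbours of \<open>v\<close>.\<close>
  have "inj_on f {..<b}"
  proof (rule inj_onI)
    fix y1 y2 assume y: "y1 \<in> {..<b}" "y2 \<in> {..<b}" "f y1 = f y2"
    obtain u where u: "u < a" "cycle_succ a u = f y1"
      using ex_cycle_succ_eq onto y by blast
    define w where "w = cycle_succ a (f y1)"
    have "f y1 < a" using onto y by auto
    then have "w < a" "u \<noteq> w"
      using u assms(2) unfolding w_def cycle_succ_def by (auto split: if_splits)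
    then obtain x z where x: "x < b" "f x = u" and z: "z < b" "f z = w" "x \<noteq> z"
      using onto u by (metis imageE lessThan_iff)
    have "cycle_adj b x y1" "cycle_adj b x y2" "cycle_adj b z y1" "cycle_adj b z y2"
      using adj x z y u unfolding w_def cycle_adj_def by auto
    then show "y1 = y2" using cycle_adj_common_neighbours[OF assms(3)] x z y by blast
  qed
  then show ?thesis using onto by (metis card_image card_lessThan)
qed

lemma not_wqo_shi_Av_if_not_complete:
  assumes D: "fin_refl_digraph D" and not_complete: "\<not> (verts D \<noteq> {} \<and> arcs D = verts D \<times> verts D)"
  shows "\<not> wqo_shi (Av D)"
proof (cases "verts D \<noteq> {} \<and> semicomplete D")
  case True
  then have "\<not> symmetric_digraph D" using complete_if_semicomplete_symmetric D not_complete by blast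
  then have "\<not> shi_le D (co_sym_cycle n)" for n
    using symmetric_if_shi_le[OF D _ symmetric_co_sym_cycle] by blast
  then have "co_sym_cycle n \<in> Av D" if "n \<ge> 5" for n
    using fin_refl_co_sym_cycle that unfolding Av_def by simp
  then show ?thesis using co_sym_cycle_shi_le_imp_eq by (intro not_wqo_shi_if_antichain[of 5]) auto
next
  case False
  have "\<not> shi_le D (co_cycle n)" if "n \<ge> 3" for n
  proof
    assume le: "shi_le D (co_cycle n)"
    have "0 \<in> verts (co_cycle n)" using that unfolding co_cycle_def verts_def by simp
    then have "verts D \<noteq> {}" using shi_le_nonempty[OF le] by blast
    moreover have "semicomplete D" using semicomplete_if_shi_le[OF le semicomplete_co_cycle[OF that]] .
    ultimately show False using False by blast
  qed
  then have "co_cycle n \<in> Av D" if "n \<ge> 5" for n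
    using fin_refl_co_cycle that unfolding Av_def by simp
  then show ?thesis using co_cycle_shi_le_imp_eq by (intro not_wqo_shi_if_antichain[of 5]) auto
qed

section \<open>Matchings and vertex covers\<close>

definition matching :: "'a digraph \<Rightarrow> ('a \<times> 'a) set \<Rightarrow> bool" where
  "matching E M \<longleftrightarrow> M \<subseteq> arcs E \<and> (\<forall>p\<in>M. fst p \<noteq> snd p) \<and>
     (\<forall>p\<in>M. \<forall>q\<in>M. p \<noteq> q \<longrightarrow> {fst p, snd p} \<inter> {fst q, snd q} = {})"

definition vertex_cover :: "'a digraph \<Rightarrow> 'a set \<Rightarrow> bool" where
  "vertex_cover E C \<longleftrightarrow> C \<subseteq> verts E \<and> (\<forall>(x, y)\<in>arcs E. x \<noteq> y \<longrightarrow> x \<in> C \<or> y \<in> C)"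

definition arc_end :: "('a \<times> 'a) \<times> bool \<Rightarrow> 'a" where
  "arc_end = (\<lambda>(p, b). if b then fst p else snd p)"

lemma inj_on_arc_end_matching:
  assumes "matching E M"
  shows "inj_on arc_end (M \<times> UNIV)"
  unfolding arc_end_def
proof (rule inj_onI, clarify)
  fix p b q c assume pq: "p \<in> M" "q \<in> M" and eq: "(if b then fst p else snd p) = (if c then fst q else snd q)"
  have "fst p \<noteq> snd p" "p \<noteq> q \<Longrightarrow> {fst p, snd p} \<inter> {fst q, snd q} = {}"
    using assms pq unfolding matching_def by auto
  then show "p = q \<and> b = c" using eq by (cases b; cases c; auto)
qed

lemma shi_le_complete_if_arcs_realized:
  assumes E: "fin_refl_digraph E" and complete: "arcs D = verts D \<times> verts D"
    and into: "f ` verts E \<subseteq> verts D"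
    and realized: "\<And>u v. u \<in> verts D \<Longrightarrow> v \<in> verts D \<Longrightarrow> \<exists>x y. (x, y) \<in> arcs E \<and> f x = u \<and> f y = v"
  shows "shi_le D E"
proof -
  have onto: "f ` verts E = verts D"
  proof
    show "verts D \<subseteq> f ` verts E"
      using realized fin_refl_digraph_arcsD[OF E] by (metis image_eqI subsetI)
  qed (fact into)
  have "strong_hom f E D"
    unfolding strong_hom_def
  proof (intro conjI allI impI ballI)
    fix x y assume "(x, y) \<in> arcs E"
    then show "(f x, f y) \<in> arcs D" using complete into fin_refl_digraph_arcsD[OF E] by blast
  next
    fix u v assume "u \<in> f ` verts E" "v \<in> f ` verts E"
    then show "\<exists>x y. (x, y) \<in> arcs E \<and> f x = u \<and> f y = v" using realized onto by blast
  qed (fact into)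
  then show ?thesis unfolding shi_le_def using onto by blast
qed

lemma shi_le_complete_if_large_matching:
  fixes E :: "'b digraph" and D :: "'a digraph"
  assumes E: "fin_refl_digraph E" and D: "verts D \<noteq> {}" "finite (verts D)"
    and complete: "arcs D = verts D \<times> verts D"
    and M: "matching E M" "finite M" and large: "card (verts D) ^ 2 \<le> card M"
  shows "shi_le D E"
proof -
  let ?P = "verts D \<times> verts D"
  let ?I = "?P \<times> (UNIV :: bool set)"
  obtain g where g: "g ` ?P \<subseteq> M" "inj_on g ?P"
    using card_le_inj[of ?P M] D M(2) large by (auto simp: card_cartesian_product power2_eq_square)
  txt \<open>The ends of the matched arcs \<open>g p\<close> are pairwise distinct, so \<open>f\<close> can send the tail and the
    head of \<open>g (u, v)\<close> to \<open>u\<close> and \<open>v\<close>.\<close>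
  define a where "a = arc_end \<circ> map_prod g id"
  have "inj_on (map_prod g id) ?I" using g(2) by (simp add: map_prod_inj_on)
  moreover have "map_prod g id ` ?I \<subseteq> M \<times> UNIV" using g(1) by auto
  then have "inj_on arc_end (map_prod g id ` ?I)"
    using inj_on_subset[OF inj_on_arc_end_matching[OF M(1)]] by blast
  ultimately have "inj_on a ?I" unfolding a_def by (rule comp_inj_on)
  then have a_inv: "inv_into ?I a (a q) = q" if "q \<in> ?I" for q
    using that by (simp add: inv_into_f_f)
  obtain v0 where v0: "v0 \<in> verts D" using D by blast
  define f where "f x = (if x \<in> a ` ?I then arc_end (inv_into ?I a x) else v0)" for x
  have f_a: "f (a q) = arc_end q" if "q \<in> ?I" for q
    using a_inv[OF that] that unfolding f_def by auto
  have "f x \<in> verts D" for x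
  proof (cases "x \<in> a ` ?I")
    case True
    then have "inv_into ?I a x \<in> ?I" by (rule inv_into_into)
    then show ?thesis using True unfolding f_def arc_end_def by auto
  qed (simp add: f_def v0)
  then have "f ` verts E \<subseteq> verts D" by blast
  moreover have "\<exists>x y. (x, y) \<in> arcs E \<and> f x = u \<and> f y = v" if "u \<in> verts D" "v \<in> verts D" for u v
  proof (intro exI conjI)
    have "g (u, v) \<in> arcs E" using g M(1) that unfolding matching_def by auto
    then show "(a ((u, v), True), a ((u, v), False)) \<in> arcs E" unfolding a_def arc_end_def by simp
    show "f (a ((u, v), True)) = u" "f (a ((u, v), False)) = v"
      using f_a that unfolding arc_end_def by auto
  qed
  ultimately show ?thesis by (rule shi_le_complete_if_arcs_realized[OF E complete])
qed

lemma finite_matching: "fin_refl_digraph E \<Longrightarrow> matching E M \<Longrightarrow> finite M"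
  unfolding fin_refl_digraph_def is_digraph_def matching_def
  by (meson finite_SigmaI rev_finite_subset)

lemma ex_maximum_matching:
  assumes E: "fin_refl_digraph E"
  shows "\<exists>M. matching E M \<and> (\<forall>M'. matching E M' \<longrightarrow> card M' \<le> card M)"
proof -
  have "finite (arcs E)" using E unfolding fin_refl_digraph_def is_digraph_def
    by (meson finite_SigmaI rev_finite_subset)
  then have "\<forall>M. matching E M \<longrightarrow> card M < Suc (card (arcs E))"
    unfolding matching_def by (simp add: card_mono less_Suc_eq_le)
  moreover have "matching E {}" unfolding matching_def by simp
  ultimately show ?thesis by (rule Lattices_Big.ex_has_greatest_nat[rotated])
qed

lemma matching_insert:
  assumes "matching E M" "(x, y) \<in> arcs E" "x \<noteq> y" "x \<notin> fst ` M \<union> snd ` M" "y \<notin> fst ` M \<union> snd ` M"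
  shows "matching E (insert (x, y) M)"
  using assms unfolding matching_def by (auto simp: image_iff)

lemma vertex_cover_maximum_matching:
  assumes E: "fin_refl_digraph E" and M: "matching E M"
    and maximum: "\<And>M'. matching E M' \<Longrightarrow> card M' \<le> card M"
  shows "vertex_cover E (fst ` M \<union> snd ` M)"
proof -
  let ?C = "fst ` M \<union> snd ` M"
  have "x \<in> ?C \<or> y \<in> ?C" if xy: "(x, y) \<in> arcs E" "x \<noteq> y" for x y
  proof (rule ccontr)
    assume "\<not> (x \<in> ?C \<or> y \<in> ?C)"
    then have "matching E (insert (x, y) M)" "(x, y) \<notin> M"
      using matching_insert[OF M xy] by (auto simp: image_iff)
    then show False
      using maximum finite_matching[OF E M] by (metis card_insert_disjoint not_less_eq_eq le_refl)
  qed
  moreover have "?C \<subseteq> verts E"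
    using M fin_refl_digraph_arcsD[OF E] unfolding matching_def by force
  ultimately show ?thesis unfolding vertex_cover_def by blast
qed

lemma small_vertex_cover_if_not_shi_le_complete:
  assumes E: "fin_refl_digraph E" and D: "verts D \<noteq> {}" "finite (verts D)"
    and complete: "arcs D = verts D \<times> verts D" and not_le: "\<not> shi_le D E"
  shows "\<exists>C. vertex_cover E C \<and> finite C \<and> card C \<le> 2 * card (verts D) ^ 2"
proof -
  obtain M where M: "matching E M" and maximum: "\<And>M'. matching E M' \<Longrightarrow> card M' \<le> card M"
    using ex_maximum_matching[OF E] by blast
  have fin: "finite M" using finite_matching[OF E M] .
  have "card M \<le> card (verts D) ^ 2"
    using shi_le_complete_if_large_matching[OF E D complete M fin] not_le nat_le_linear by blast
  moreover have "card (fst ` M \<union> snd ` M) \<le> 2 * card M"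
    using card_Un_le[of "fst ` M" "snd ` M"] card_image_le[OF fin, of fst] card_image_le[OF fin, of snd]
    by linarith
  ultimately show ?thesis
    using vertex_cover_maximum_matching[OF E M maximum] fin by (intro exI[of _ "fst ` M \<union> snd ` M"]) auto
qed

section \<open>Digraphs with a small vertex cover\<close>

text \<open>Let \<open>e\<close> enumerate a vertex cover of \<open>E\<close> by \<open>{..<k}\<close>. The uncovered vertices are pairwise
  non-adjacent, so each is described by its cover type: the cover vertices \<open>e j\<close> it points to, encoded
  \<open>(j, True)\<close>, and those pointing to it, encoded \<open>(j, False)\<close>.\<close>

definition cover_type :: "'a digraph \<Rightarrow> nat \<Rightarrow> (nat \<Rightarrow> 'a) \<Rightarrow> 'a \<Rightarrow> (nat \<times> bool) set" where
  "cover_type E k e x = {(j, b). j < k \<and> (if b then (x, e j) \<in> arcs E else (e j, x) \<in> arcs E)}"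

definition cover_arcs :: "'a digraph \<Rightarrow> nat \<Rightarrow> (nat \<Rightarrow> 'a) \<Rightarrow> (nat \<times> nat) set" where
  "cover_arcs E k e = {(i, j). i < k \<and> j < k \<and> (e i, e j) \<in> arcs E}"

definition uncovered :: "'a digraph \<Rightarrow> nat \<Rightarrow> (nat \<Rightarrow> 'a) \<Rightarrow> 'a set" where
  "uncovered E k e = verts E - e ` {..<k}"

definition cover_types :: "'a digraph \<Rightarrow> nat \<Rightarrow> (nat \<Rightarrow> 'a) \<Rightarrow> (nat \<times> bool) set set" where
  "cover_types E k e = cover_type E k e ` uncovered E k e"

definition cover_type_class :: "'a digraph \<Rightarrow> nat \<Rightarrow> (nat \<Rightarrow> 'a) \<Rightarrow> (nat \<times> bool) set \<Rightarrow> 'a set" where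
  "cover_type_class E k e t = {x \<in> uncovered E k e. cover_type E k e x = t}"

lemma out_arc_iff_cover_type: "j < k \<Longrightarrow> (x, e j) \<in> arcs E \<longleftrightarrow> (j, True) \<in> cover_type E k e x"
  and in_arc_iff_cover_type: "j < k \<Longrightarrow> (e j, x) \<in> arcs E \<longleftrightarrow> (j, False) \<in> cover_type E k e x"
  unfolding cover_type_def by auto

lemma uncovered_arc_eq:
  "vertex_cover E (e ` {..<k}) \<Longrightarrow> (x, y) \<in> arcs E \<Longrightarrow> x \<in> uncovered E k e \<Longrightarrow> y \<in> uncovered E k e \<Longrightarrow> x = y"
  unfolding vertex_cover_def uncovered_def by auto

locale cover_preserving_map =
  fixes E :: "'a digraph" and E' :: "'b digraph" and k :: nat and e :: "nat \<Rightarrow> 'a" and e' :: "nat \<Rightarrow> 'b"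
    and f :: "'b \<Rightarrow> 'a"
  assumes E: "fin_refl_digraph E" and E': "fin_refl_digraph E'"
    and cover: "vertex_cover E (e ` {..<k})" and cover': "vertex_cover E' (e' ` {..<k})"
    and same_cover_arcs: "cover_arcs E k e = cover_arcs E' k e'"
    and map_cover: "\<And>j. j < k \<Longrightarrow> f (e' j) = e j"
    and map_uncovered: "\<And>x. x \<in> uncovered E' k e' \<Longrightarrow>
      f x \<in> uncovered E k e \<and> cover_type E k e (f x) = cover_type E' k e' x"
    and onto_uncovered: "uncovered E k e \<subseteq> f ` uncovered E' k e'"
begin

lemma cover_arc_iff: "i < k \<Longrightarrow> j < k \<Longrightarrow> (e' i, e' j) \<in> arcs E' \<longleftrightarrow> (e i, e j) \<in> arcs E"
  using same_cover_arcs unfolding cover_arcs_def by blast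

lemma arc_to_cover_iff:
  assumes "x \<in> verts E'" "j < k"
  shows "(x, e' j) \<in> arcs E' \<longleftrightarrow> (f x, e j) \<in> arcs E"
proof (cases "x \<in> e' ` {..<k}")
  case True
  then show ?thesis using cover_arc_iff map_cover assms(2) by auto
next
  case False
  then have "x \<in> uncovered E' k e'" using assms(1) unfolding uncovered_def by blast
  then show ?thesis using map_uncovered out_arc_iff_cover_type[OF assms(2)] by metis
qed

lemma arc_from_cover_iff:
  assumes "x \<in> verts E'" "j < k"
  shows "(e' j, x) \<in> arcs E' \<longleftrightarrow> (e j, f x) \<in> arcs E"
proof (cases "x \<in> e' ` {..<k}")
  case True
  then show ?thesis using cover_arc_iff map_cover assms(2) by auto
next
  case False
  then have "x \<in> uncovered E' k e'" using assms(1) unfolding uncovered_def by blast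
  then show ?thesis using map_uncovered in_arc_iff_cover_type[OF assms(2)] by metis
qed

lemma image_verts: "f ` verts E' = verts E"
proof
  have cover_verts: "e ` {..<k} \<subseteq> verts E" "e' ` {..<k} \<subseteq> verts E'"
    using cover cover' unfolding vertex_cover_def by auto
  show "f ` verts E' \<subseteq> verts E"
  proof clarify
    fix x assume x: "x \<in> verts E'"
    show "f x \<in> verts E"
    proof (cases "x \<in> e' ` {..<k}")
      case True
      then show ?thesis using map_cover cover_verts(1) by auto
    next
      case False
      then show ?thesis using x map_uncovered unfolding uncovered_def by blast
    qed
  qed
  show "verts E \<subseteq> f ` verts E'"
  proof
    fix u assume u: "u \<in> verts E"
    show "u \<in> f ` verts E'"
    proof (cases "u \<in> e ` {..<k}")
      case True
      then show ?thesis using map_cover cover_verts(2) by force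
    next
      case False
      then show ?thesis using u onto_uncovered unfolding uncovered_def by blast
    qed
  qed
qed

lemma maps_arcs:
  assumes "(x, y) \<in> arcs E'"
  shows "(f x, f y) \<in> arcs E"
proof -
  have xy: "x \<in> verts E'" "y \<in> verts E'" using fin_refl_digraph_arcsD[OF E' assms] by auto
  consider "y \<in> e' ` {..<k}" | "x \<in> e' ` {..<k}" | "x \<in> uncovered E' k e'" "y \<in> uncovered E' k e'"
    using xy unfolding uncovered_def by blast
  then show ?thesis
  proof cases
    case 1 then show ?thesis using arc_to_cover_iff xy assms map_cover by auto
  next
    case 2 then show ?thesis using arc_from_cover_iff xy assms map_cover by auto
  next
    case 3
    then have "x = y" using uncovered_arc_eq[OF cover' assms] by blast
    then show ?thesis using fin_refl_digraph_reflD[OF E] image_verts xy by blast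
  qed
qed

lemma lifts_arcs:
  assumes uv: "(u, v) \<in> arcs E"
  shows "\<exists>x y. (x, y) \<in> arcs E' \<and> f x = u \<and> f y = v"
proof -
  have "u \<in> verts E" "v \<in> verts E" using fin_refl_digraph_arcsD[OF E uv] by auto
  then obtain x y where x: "x \<in> verts E'" "f x = u" and y: "y \<in> verts E'" "f y = v"
    using image_verts by (metis imageE)
  consider "v \<in> e ` {..<k}" | "u \<in> e ` {..<k}" | "u \<in> uncovered E k e" "v \<in> uncovered E k e"
    using \<open>u \<in> verts E\<close> \<open>v \<in> verts E\<close> unfolding uncovered_def by blast
  then show ?thesis
  proof cases
    case 1
    then obtain j where j: "j < k" "v = e j" by blast
    then have "(x, e' j) \<in> arcs E'" using arc_to_cover_iff[OF x(1) j(1)] x(2) uv by simp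
    then show ?thesis using map_cover j x(2) by blast
  next
    case 2
    then obtain i where i: "i < k" "u = e i" by blast
    then have "(e' i, y) \<in> arcs E'" using arc_from_cover_iff[OF y(1) i(1)] y(2) uv by simp
    then show ?thesis using map_cover i y(2) by blast
  next
    case 3
    then have "u = v" using uncovered_arc_eq[OF cover uv] by blast
    then show ?thesis using fin_refl_digraph_reflD[OF E' x(1)] x(2) by blast
  qed
qed

lemma shi_le: "shi_le E E'"
  unfolding shi_le_def strong_hom_def using image_verts maps_arcs lifts_arcs by blast

end

lemma ex_image_eq_if_card_le:
  assumes "finite A" "finite B" "B \<noteq> {}" "card B \<le> card A"
  shows "\<exists>h. h ` A = B"
proof -
  obtain g where g: "g ` B \<subseteq> A" "inj_on g B" using card_le_inj[of B A] assms by auto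
  obtain b0 where b0: "b0 \<in> B" using assms by auto
  define h where "h a = (if a \<in> g ` B then inv_into B g a else b0)" for a
  have "h ` A = B"
  proof
    show "h ` A \<subseteq> B" unfolding h_def using b0 by (auto simp: inv_into_into)
    show "B \<subseteq> h ` A"
    proof
      fix b assume b: "b \<in> B"
      then have "h (g b) = b" unfolding h_def using g by auto
      then show "b \<in> h ` A" using g b by (metis image_eqI image_subset_iff)
    qed
  qed
  then show ?thesis by blast
qed

lemma shi_le_if_cover_profile_dominated:
  fixes E :: "'a digraph" and E' :: "'b digraph"
  assumes E: "fin_refl_digraph E" and E': "fin_refl_digraph E'"
    and inj: "inj_on e' {..<k}"
    and cover: "vertex_cover E (e ` {..<k})" and cover': "vertex_cover E' (e' ` {..<k})"
    and same_arcs: "cover_arcs E k e = cover_arcs E' k e'"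
    and same_types: "cover_types E k e = cover_types E' k e'"
    and dominated: "\<And>t. t \<in> cover_types E k e \<Longrightarrow>
      card (cover_type_class E k e t) \<le> card (cover_type_class E' k e' t)"
  shows "shi_le E E'"
proof -
  have "\<exists>h. h ` cover_type_class E' k e' t = cover_type_class E k e t" if t: "t \<in> cover_types E k e" for t
  proof (rule ex_image_eq_if_card_le)
    show "finite (cover_type_class E' k e' t)" "finite (cover_type_class E k e t)"
      using fin_refl_digraph_finite[OF E] fin_refl_digraph_finite[OF E']
      unfolding cover_type_class_def uncovered_def by auto
    show "cover_type_class E k e t \<noteq> {}"
      using t unfolding cover_types_def cover_type_class_def by auto
  qed (rule dominated[OF t])
  then obtain H where H: "\<And>t. t \<in> cover_types E k e \<Longrightarrow>
      H t ` cover_type_class E' k e' t = cover_type_class E k e t" by metis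
  define f where
    "f x = (if x \<in> e' ` {..<k} then e (inv_into {..<k} e' x) else H (cover_type E' k e' x) x)" for x
  have f_uncovered: "f x = H (cover_type E' k e' x) x" if "x \<in> uncovered E' k e'" for x
    using that unfolding f_def uncovered_def by auto
  have "cover_preserving_map E E' k e e' f"
  proof
    show "f (e' j) = e j" if "j < k" for j using that inj unfolding f_def by auto
  next
    fix x assume x: "x \<in> uncovered E' k e'"
    let ?t = "cover_type E' k e' x"
    have "?t \<in> cover_types E k e" using x same_types unfolding cover_types_def by auto
    moreover have "x \<in> cover_type_class E' k e' ?t" using x unfolding cover_type_class_def by auto
    ultimately have "f x \<in> cover_type_class E k e ?t" using H f_uncovered[OF x] by blast
    then show "f x \<in> uncovered E k e \<and> cover_type E k e (f x) = ?t"
      unfolding cover_type_class_def by auto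
  next
    show "uncovered E k e \<subseteq> f ` uncovered E' k e'"
    proof
      fix u assume u: "u \<in> uncovered E k e"
      let ?t = "cover_type E k e u"
      have t: "?t \<in> cover_types E k e" using u unfolding cover_types_def by auto
      have "u \<in> H ?t ` cover_type_class E' k e' ?t"
        using u H[OF t] unfolding cover_type_class_def by auto
      then obtain x where x: "x \<in> uncovered E' k e'" "cover_type E' k e' x = ?t" "u = H ?t x"
        unfolding cover_type_class_def by blast
      then have "f x = u" using f_uncovered by simp
      then show "u \<in> f ` uncovered E' k e'" using x(1) by blast
    qed
  qed (fact E E' cover cover' same_arcs)+
  then show ?thesis by (rule cover_preserving_map.shi_le)
qed

section \<open>Dickson's lemma\<close>

lemma incseq_subseq_nat:
  fixes w :: "nat \<Rightarrow> nat"
  shows "\<exists>h. strict_mono h \<and> incseq (\<lambda>n. w (h n))"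
proof -
  obtain f where f: "strict_mono f" "monoseq (\<lambda>n. w (f n))" using seq_monosub[of w] by blast
  show ?thesis
  proof (cases "incseq (\<lambda>n. w (f n))")
    case True
    then show ?thesis using f(1) by blast
  next
    case False
    then have dec: "decseq (\<lambda>n. w (f n))" using f(2) unfolding monoseq_iff by blast
    txt \<open>A non-increasing sequence of naturals is constant from the point where it attains its minimum.\<close>
    define m where "m = (LEAST x. \<exists>n. w (f n) = x)"
    have "\<exists>n. w (f n) = m" unfolding m_def by (rule LeastI_ex) blast
    then obtain N where N: "w (f N) = m" by blast
    have "m \<le> w (f n)" for n unfolding m_def by (rule Least_le) blast
    then have "w (f (n + N)) = m" for n using decseqD[OF dec, of N "n + N"] N by (metis le_add2 le_antisym)
    moreover have "strict_mono (\<lambda>n. f (n + N))" using f(1) unfolding strict_mono_def by simp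
    ultimately show ?thesis by (intro exI[of _ "\<lambda>n. f (n + N)"]) (simp add: incseq_def)
  qed
qed

lemma dickson_subseq:
  fixes v :: "nat \<Rightarrow> 'b \<Rightarrow> nat"
  assumes "finite T"
  shows "\<exists>h. strict_mono h \<and> (\<forall>t\<in>T. incseq (\<lambda>n. v (h n) t))"
  using assms
proof (induction T rule: finite_induct)
  case empty
  show ?case using strict_mono_id by blast
next
  case (insert t0 T)
  then obtain h where h: "strict_mono h" "\<forall>t\<in>T. incseq (\<lambda>n. v (h n) t)" by blast
  obtain g where g: "strict_mono g" "incseq (\<lambda>n. v (h (g n)) t0)"
    using incseq_subseq_nat[of "\<lambda>n. v (h n) t0"] by blast
  have "incseq (\<lambda>n. v (h (g n)) t)" if "t \<in> T" for t
    using h(2) that strict_mono_mono[OF g(1)] unfolding incseq_def mono_def by blast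
  then have "strict_mono (h \<circ> g) \<and> (\<forall>t\<in>insert t0 T. incseq (\<lambda>n. v ((h \<circ> g) n) t))"
    using strict_mono_o[OF h(1) g(1)] g(2) by simp
  then show ?case by blast
qed

lemma dickson_pigeonhole:
  fixes v :: "nat \<Rightarrow> 'b \<Rightarrow> nat" and key :: "nat \<Rightarrow> 'c"
  assumes "finite T" "finite (range key)"
  shows "\<exists>i j. i < j \<and> key i = key j \<and> (\<forall>t\<in>T. v i t \<le> v j t)"
proof -
  obtain h where h: "strict_mono h" "\<forall>t\<in>T. incseq (\<lambda>n. v (h n) t)"
    using dickson_subseq[OF assms(1)] by blast
  have "finite (range (key \<circ> h))" using assms(2) by (rule finite_subset[rotated]) auto
  then have "\<not> inj (key \<circ> h)" using finite_imageD infinite_UNIV_nat by blast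
  then obtain m n where "m < n" "key (h m) = key (h n)"
    unfolding inj_def by (metis comp_apply linorder_neqE_nat)
  then show ?thesis using h unfolding strict_mono_def incseq_def by (metis less_imp_le)
qed

section \<open>Avoiding a complete digraph\<close>

lemma ex_shi_le_pair_if_bounded_covers:
  fixes s :: "nat \<Rightarrow> 'a digraph"
  assumes fin: "\<And>i. fin_refl_digraph (s i)"
    and covers: "\<And>i. \<exists>C. vertex_cover (s i) C \<and> finite C \<and> card C \<le> L"
  shows "\<exists>i j. i < j \<and> shi_le (s i) (s j)"
proof -
  have "\<exists>k e. k \<le> L \<and> inj_on e {..<k} \<and> vertex_cover (s i) (e ` {..<k})" for i
  proof -
    obtain C where C: "vertex_cover (s i) C" "finite C" "card C \<le> L" using covers by blast
    moreover obtain e where "bij_betw e {..<card C} C"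
      using ex_bij_betw_nat_finite[OF C(2)] by (auto simp: atLeast0LessThan)
    ultimately show ?thesis unfolding bij_betw_def by (intro exI[of _ "card C"] exI[of _ e]) simp
  qed
  then obtain k e where ke: "\<And>i. k i \<le> L" "\<And>i. inj_on (e i) {..<k i}"
    "\<And>i. vertex_cover (s i) (e i ` {..<k i})" by metis
  define key where "key i = (k i, cover_arcs (s i) (k i) (e i), cover_types (s i) (k i) (e i))" for i
  define T where "T = Pow ({..<L} \<times> (UNIV :: bool set))"
  have "cover_type (s i) (k i) (e i) x \<in> T" for i x
    using ke(1)[of i] unfolding cover_type_def T_def by auto
  then have types_T: "cover_types (s i) (k i) (e i) \<subseteq> T" for i unfolding cover_types_def by blast
  then have "key i \<in> {..L} \<times> Pow ({..<L} \<times> {..<L}) \<times> Pow T" for i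
    using ke(1)[of i] unfolding key_def cover_arcs_def by auto
  then have "range key \<subseteq> {..L} \<times> Pow ({..<L} \<times> {..<L}) \<times> Pow T" by blast
  moreover have fin_T: "finite T" by (simp add: T_def)
  ultimately have "finite (range key)" by (simp add: finite_subset)
  then obtain i j where ij: "i < j" "key i = key j" and le: "\<forall>t\<in>T.
      card (cover_type_class (s i) (k i) (e i) t) \<le> card (cover_type_class (s j) (k j) (e j) t)"
    using dickson_pigeonhole[OF fin_T, of key "\<lambda>n t. card (cover_type_class (s n) (k n) (e n) t)"]
    by blast
  have same: "k j = k i" "cover_arcs (s i) (k i) (e i) = cover_arcs (s j) (k i) (e j)"
    "cover_types (s i) (k i) (e i) = cover_types (s j) (k i) (e j)"
    using ij(2) unfolding key_def by auto
  have "shi_le (s i) (s j)"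
  proof (rule shi_le_if_cover_profile_dominated[OF fin fin _ ke(3) _ same(2,3)])
    show "inj_on (e j) {..<k i}" "vertex_cover (s j) (e j ` {..<k i})" using ke(2,3)[of j] same(1) by simp_all
    show "card (cover_type_class (s i) (k i) (e i) t) \<le> card (cover_type_class (s j) (k i) (e j) t)"
      if "t \<in> cover_types (s i) (k i) (e i)" for t
      using le that types_T[of i] same(1) by auto
  qed
  then show ?thesis using ij(1) by blast
qed

lemma wqo_shi_Av_complete:
  assumes D: "verts D \<noteq> {}" "finite (verts D)" and complete: "arcs D = verts D \<times> verts D"
  shows "wqo_shi (Av D)"
proof -
  have fin: "fin_refl_digraph E" and avoids: "\<not> shi_le D E" if "E \<in> Av D" for E
    using that unfolding Av_def by blast+
  have "\<not> (\<exists>s :: nat \<Rightarrow> nat digraph. (\<forall>i. s i \<in> Av D) \<and> (\<forall>i. shi_le (s (Suc i)) (s i) \<and> \<not> shi_le (s i) (s (Suc i))))"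
  proof (intro notI, elim exE conjE)
    fix s :: "nat \<Rightarrow> nat digraph"
    assume "\<forall>i. s i \<in> Av D" "\<forall>i. shi_le (s (Suc i)) (s i) \<and> \<not> shi_le (s i) (s (Suc i))"
    then show False using no_shi_descending_chain[of s] fin by blast
  qed
  moreover have "\<not> (\<exists>s :: nat \<Rightarrow> nat digraph. (\<forall>i. s i \<in> Av D) \<and> (\<forall>i j. i \<noteq> j \<longrightarrow> \<not> shi_le (s i) (s j)))"
  proof (intro notI, elim exE conjE)
    fix s :: "nat \<Rightarrow> nat digraph"
    assume mem: "\<forall>i. s i \<in> Av D" and antichain: "\<forall>i j. i \<noteq> j \<longrightarrow> \<not> shi_le (s i) (s j)"
    have covers: "\<exists>C. vertex_cover (s i) C \<and> finite C \<and> card C \<le> 2 * card (verts D) ^ 2" for i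
      using small_vertex_cover_if_not_shi_le_complete[OF fin D complete avoids] mem by blast
    obtain i j where "i < j" "shi_le (s i) (s j)"
      using ex_shi_le_pair_if_bounded_covers[OF fin covers] mem by blast
    then show False using antichain by simp
  qed
  ultimately show ?thesis unfolding wqo_shi_def by (intro conjI)
qed

theorem theorem4p7:
  fixes D :: "'a digraph"
  assumes "fin_refl_digraph D"
  shows "wqo_shi (Av D) \<longleftrightarrow> (\<exists>n\<ge>1. digraph_iso D (complete_digraph n))"
proof -
  have "wqo_shi (Av D) \<longleftrightarrow> verts D \<noteq> {} \<and> arcs D = verts D \<times> verts D"
  proof
    show "wqo_shi (Av D) \<Longrightarrow> verts D \<noteq> {} \<and> arcs D = verts D \<times> verts D"
      using not_wqo_shi_Av_if_not_complete[OF assms] by blast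
    show "verts D \<noteq> {} \<and> arcs D = verts D \<times> verts D \<Longrightarrow> wqo_shi (Av D)"
      using wqo_shi_Av_complete[OF _ fin_refl_digraph_finite[OF assms]] by simp
  qed
  then show ?thesis by (simp only: digraph_iso_complete_digraph_iff[OF assms])
qed

end
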